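(* Let $(P,Q)$ be a global solution of the Cucker–Smale model with velocity control described in the context. Then the following are equivalent: (1) $(P,Q)$ exhibits bi-cluster flocking; (2) there exists a partition $\{A,B\}$ of $[N]$ such that \[ \sup_{t\ge0}\max\{D_{Q,A}(t),D_{Q,B}(t)\}<\infty\quad\text{and}\quad\sup_{t\ge0}\min_{i\in A,\,j\in B}|q_i(t)-q_j(t)|=\infty. \]
   Context: Let $N\ge2$, $d\ge1$, $\kappa>0$, $[N]=\{1,\dots,N\}$. The velocity control function $G:\mathbb R^d\to\mathbb R^d$ is $G(p)=g(|p|)\,p/|p|$ for $p\ne0$, $G(0)=0$, with $g\in C^1([0,\infty))$, $g(0)=0$, $0<m\le g'\le M$ on every compact interval (constants depending on the interval), and $g$ convex or concave on $(0,\infty)$. The kernel $\psi:(0,\infty)\to(0,\infty)$ is bounded, Lipschitz continuous and nonincreasing. The model is, for $i\in[N]$, $t>0$: \[ \dot q_i=G(p_i),\qquad \dot p_i=\frac{\kappa}{N}\sum_{k=1}^N\psi(|q_k-q_i|)\big(G(p_k)-G(p_i)\big),\qquad (q_i,p_i)(0)=(q_i^0,p_i^0)\in\mathbb R^d\times\mathbb R^d. \] For $S\subset[N]$: $D_{Q,S}(t)=\max_{i,j\in S}|q_i(t)-q_j(t)|$, $D_{P,S}(t)=\max_{i,j\in S}|p_i(t)-p_j(t)|$. The solution exhibits bi-cluster flocking if there is a nonempty proper subset $S\subset[N]$ with $\sup_{t\ge0}\max\{D_{Q,S}(t),D_{Q,[N]\setminus S}(t)\}<\infty$, $\sup_{t\ge0}\min_{i\in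 S,\,j\notin S}|q_i(t)-q_j(t)|=\infty$, and $\lim_{t\to\infty}D_{P,S}(t)=\lim_{t\to\infty}D_{P,[N]\setminus S}(t)=0$. *)

theory Defs
  imports "HOL-Analysis.Analysis"
begin

definition Gctl :: "(real \<Rightarrow> real) \<Rightarrow> real^'d \<Rightarrow> real^'d" where
  "Gctl g p = (if p = 0 then 0 else (g (norm p) / norm p) *\<^sub>R p)"

definition admissible_g :: "(real \<Rightarrow> real) \<Rightarrow> bool" where
  "admissible_g g \<longleftrightarrow>
     (\<exists>g'. (\<forall>x\<ge>0. (g has_real_derivative g' x) (at x within {0..}))
         \<and> continuous_on {0..} g'
         \<and> (\<forall>R\<ge>0. \<exists>m M. 0 < m \<and> (\<forall>x\<in>{0..R}. m \<le> g' x \<and> g' x \<le> M)))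
     \<and> g 0 = 0
     \<and> (convex_on {0<..} g \<or> concave_on {0<..} g)"

text \<open>Admissible kernel psi: positive, bounded, Lipschitz, nonincreasing
  (on [0,oo), psi(0) being the continuous extension).\<close>
definition admissible_psi :: "(real \<Rightarrow> real) \<Rightarrow> bool" where
  "admissible_psi \<psi> \<longleftrightarrow>
     (\<forall>r\<ge>0. \<psi> r > 0)
     \<and> (\<exists>B. \<forall>r\<ge>0. \<psi> r \<le> B)
     \<and> (\<exists>L. L-lipschitz_on {0..} \<psi>)
     \<and> (\<forall>x y. 0 \<le> x \<longrightarrow> x \<le> y \<longrightarrow> \<psi> y \<le> \<psi> x)"

definition CS_global_solution ::
  "nat \<Rightarrow> real \<Rightarrow> (real \<Rightarrow> real) \<Rightarrow> (real \<Rightarrow> real)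
   \<Rightarrow> (nat \<Rightarrow> real \<Rightarrow> real^'d) \<Rightarrow> (nat \<Rightarrow> real \<Rightarrow> real^'d) \<Rightarrow> bool" where
  "CS_global_solution N \<kappa> g \<psi> q p \<longleftrightarrow>
     (\<forall>i\<in>{1..N}. continuous_on {0..} (q i) \<and> continuous_on {0..} (p i))
     \<and> (\<forall>i\<in>{1..N}. \<forall>t>0.
          (q i has_vector_derivative Gctl g (p i t)) (at t)
        \<and> (p i has_vector_derivative
             (\<kappa> / real N) *\<^sub>R (\<Sum>k\<in>{1..N}. \<psi> (norm (q k t - q i t)) *\<^sub>R
                                  (Gctl g (p k t) - Gctl g (p i t)))) (at t))"

definition diam_at :: "(nat \<Rightarrow> real \<Rightarrow> real^'d) \<Rightarrow> nat set \<Rightarrow> real \<Rightarrow> real" where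
  "diam_at x S t = Max {norm (x i t - x j t) | i j. i \<in> S \<and> j \<in> S}"

definition inter_dist :: "(nat \<Rightarrow> real \<Rightarrow> real^'d) \<Rightarrow> nat set \<Rightarrow> nat set \<Rightarrow> real \<Rightarrow> real" where
  "inter_dist q A B t = Min {norm (q i t - q j t) | i j. i \<in> A \<and> j \<in> B}"

definition bounded_clusters_separating ::
  "(nat \<Rightarrow> real \<Rightarrow> real^'d) \<Rightarrow> nat set \<Rightarrow> nat set \<Rightarrow> bool" where
  "bounded_clusters_separating q A B \<longleftrightarrow>
     (\<exists>C. \<forall>t\<ge>0. max (diam_at q A t) (diam_at q B t) \<le> C)
     \<and> (\<forall>C. \<exists>t\<ge>0. inter_dist q A B t > C)"

definition bi_cluster_flocking ::
  "nat \<Rightarrow> (nat \<Rightarrow> real \<Rightarrow> real^'d) \<Rightarrow> (nat \<Rightarrow> real \<Rightarrow> real^'d) \<Rightarrow> bool" where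
  "bi_cluster_flocking N q p \<longleftrightarrow>
     (\<exists>S. S \<noteq> {} \<and> S \<subset> {1..N}
        \<and> bounded_clusters_separating q S ({1..N} - S)
        \<and> ((\<lambda>t. diam_at p S t) \<longlongrightarrow> 0) at_top
        \<and> ((\<lambda>t. diam_at p ({1..N} - S) t) \<longlongrightarrow> 0) at_top)"

end

theory Submission
  imports Defs
begin

(* Only the converse implication needs an argument, namely velocity alignment inside each
  cluster. The kinetic energy E = sum_i |p_i|^2 satisfies, after symmetrisation,
  E' = -(kappa/N) sum_{i,k} psi(|q_k - q_i|) <p_k - p_i, G(p_k) - G(p_i)>, which is nonpositive
  because G is monotone. So all velocities stay in the ball of radius R = sqrt(E(0)), on which G
  is strongly monotone with the constant m > 0 of g' >= m on [0,R], and the velocities are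
  uniformly Lipschitz in time. Inside a cluster of diameter at most C the kernel is at least
  psi(C), so E decreases at rate at least (kappa/N) psi(C) m |p_k - p_i|^2; as E is bounded
  below and |p_k - p_i| is Lipschitz, |p_k - p_i| tends to 0 (a Barbalat-type argument). *)

lemma DERIV_le_imp_decrease:
  fixes f f' :: "real \<Rightarrow> real"
  assumes "a \<le> b" and "continuous_on {a..b} f"
    and "\<And>x. a < x \<Longrightarrow> x < b \<Longrightarrow> (f has_real_derivative f' x) (at x)"
    and "\<And>x. a < x \<Longrightarrow> x < b \<Longrightarrow> f' x \<le> - r"
  shows "f b \<le> f a - r * (b - a)"
proof -
  have "f b + r * b \<le> f a + r * a"
  proof (rule DERIV_nonpos_imp_decreasing_open[OF \<open>a \<le> b\<close>])
    show "continuous_on {a..b} (\<lambda>x. f x + r * x)"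
      using assms(2) by (intro continuous_intros)
    fix x assume x: "a < x" "x < b"
    have "(f has_real_derivative f' x) (at x)" "f' x + r \<le> 0"
      using assms(3,4)[OF x] by auto
    then show "\<exists>y. ((\<lambda>x. f x + r * x) has_real_derivative y) (at x) \<and> y \<le> 0"
      by (auto intro!: exI derivative_eq_intros)
  qed
  then show ?thesis
    by (simp add: algebra_simps)
qed

lemma has_vector_derivative_bound_imp_norm_diff_le:
  fixes f :: "real \<Rightarrow> 'a::real_normed_vector"
  assumes "s \<le> t" and "continuous_on {s..t} f"
    and "\<And>x. s < x \<Longrightarrow> x < t \<Longrightarrow> (f has_vector_derivative f' x) (at x)"
    and "\<And>x. s < x \<Longrightarrow> x < t \<Longrightarrow> norm (f' x) \<le> K"
  shows "norm (f t - f s) \<le> K * (t - s)"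
proof (cases "s = t")
  case False
  then have "norm (f t - f s) \<le> K * t - K * s"
    using assms by (intro differentiable_bound_general[where \<phi>'="\<lambda>_. K"])
      (auto intro!: continuous_intros derivative_eq_intros simp: has_vector_derivative_def)
  then show ?thesis
    by (simp add: algebra_simps)
qed simp

lemma norm_diff_Lipschitz:
  fixes x y :: "real \<Rightarrow> 'a::real_normed_vector"
  assumes "norm (x t - x s) \<le> K * (t - s)" and "norm (y t - y s) \<le> K * (t - s)"
  shows "\<bar>norm (x t - y t) - norm (x s - y s)\<bar> \<le> 2 * K * (t - s)"
proof -
  have "\<bar>norm (x t - y t) - norm (x s - y s)\<bar> \<le> norm ((x t - x s) - (y t - y s))"
    using norm_triangle_ineq3[of "x t - y t" "x s - y s"] by (simp add: algebra_simps)
  also have "\<dots> \<le> norm (x t - x s) + norm (y t - y s)"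
    by (rule norm_triangle_ineq4)
  finally show ?thesis
    using assms by simp
qed

lemma has_real_derivative_sum_power2_norm:
  fixes x :: "'i \<Rightarrow> real \<Rightarrow> 'a::real_inner"
  assumes "\<And>i. i \<in> S \<Longrightarrow> (x i has_vector_derivative v i) (at t)"
  shows "((\<lambda>t. \<Sum>i\<in>S. (norm (x i t))\<^sup>2) has_real_derivative (\<Sum>i\<in>S. 2 * inner (x i t) (v i))) (at t)"
proof (rule DERIV_sum)
  fix i assume "i \<in> S"
  then have "(x i has_derivative (\<lambda>h. h *\<^sub>R v i)) (at t)"
    using assms has_vector_derivative_def by blast
  from has_derivative_inner[OF this this]
  show "((\<lambda>t. (norm (x i t))\<^sup>2) has_real_derivative 2 * inner (x i t) (v i)) (at t)"
    unfolding has_field_derivative_def power2_norm_eq_inner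
    by (rule has_derivative_eq_rhs) (auto simp: inner_commute algebra_simps)
qed

lemma double_sum_symmetrize:
  fixes w :: "'i \<Rightarrow> 'i \<Rightarrow> real" and a b :: "'i \<Rightarrow> 'a::real_inner"
  assumes "\<And>i k. w i k = w k i"
  shows "2 * (\<Sum>i\<in>S. \<Sum>k\<in>S. w i k * inner (a i) (b k - b i))
       = - (\<Sum>i\<in>S. \<Sum>k\<in>S. w i k * inner (a k - a i) (b k - b i))"
proof -
  have swap: "(\<Sum>i\<in>S. \<Sum>k\<in>S. w i k * inner (a i) (b k - b i))
        = (\<Sum>i\<in>S. \<Sum>k\<in>S. w i k * inner (a k) (b i - b k))"
    by (subst sum.swap) (simp add: assms)
  have "2 * (\<Sum>i\<in>S. \<Sum>k\<in>S. w i k * inner (a i) (b k - b i))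
      = (\<Sum>i\<in>S. \<Sum>k\<in>S. w i k * inner (a i) (b k - b i) + w i k * inner (a k) (b i - b k))"
    by (simp add: swap sum.distrib)
  also have "\<dots> = (\<Sum>i\<in>S. \<Sum>k\<in>S. - (w i k * inner (a k - a i) (b k - b i)))"
    by (intro sum.cong refl) (simp add: algebra_simps)
  finally show ?thesis
    by (simp add: sum_negf)
qed

lemma tendsto_zero_if_Lipschitz_and_dissipated:
  fixes E F u :: "real \<Rightarrow> real"
  assumes E_cont: "continuous_on {0..} E"
    and E_deriv: "\<And>t. t > 0 \<Longrightarrow> (E has_real_derivative - F t) (at t)"
    and E_bdd: "\<And>t. t \<ge> 0 \<Longrightarrow> B \<le> E t"
    and "c > 0" and F_ge: "\<And>t. t > 0 \<Longrightarrow> c * (u t)\<^sup>2 \<le> F t"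
    and "K > 0" and u_lip: "\<And>s t. 0 \<le> s \<Longrightarrow> s \<le> t \<Longrightarrow> \<bar>u t - u s\<bar> \<le> K * (t - s)"
  shows "(u \<longlongrightarrow> 0) at_top"
proof (rule tendstoI)
  fix \<epsilon> :: real assume "\<epsilon> > 0"
  define \<delta> where "\<delta> = \<epsilon> / (2 * K)"
  define a where "a = c * (\<epsilon> / 2)\<^sup>2"
  have "\<delta> > 0" "a > 0"
    using \<open>\<epsilon> > 0\<close> \<open>K > 0\<close> \<open>c > 0\<close> by (auto simp: \<delta>_def a_def)
  have drop: "E t \<le> E s - r * (t - s)"
    if "0 \<le> s" "s \<le> t" "\<And>x. s < x \<Longrightarrow> x < t \<Longrightarrow> r \<le> F x" for s t r
    using that E_deriv by (intro DERIV_le_imp_decrease[where f'="\<lambda>x. - F x"] continuous_on_subset[OF E_cont]) auto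
  have E_antimono: "E t \<le> E s" if "0 \<le> s" "s \<le> t" for s t
  proof -
    have "0 \<le> F x" if "x > 0" for x
      using F_ge[OF that] \<open>c > 0\<close> by (smt (verit) zero_le_mult_iff zero_le_power2)
    then show ?thesis
      using drop[of s t 0] that by auto
  qed
  define L where "L = Inf (E ` {0..})"
  have E_bdd_below: "bdd_below (E ` {0..})"
    using E_bdd by (auto intro!: bdd_belowI[where m=B])
  have L_le: "L \<le> E t" if "t \<ge> 0" for t
    unfolding L_def using E_bdd_below that by (intro cInf_lower) auto
  obtain T where "T \<ge> 0" "E T < L + a * \<delta>"
    using cInf_less_iff[of "E ` {0..}" "L + a * \<delta>"] E_bdd_below \<open>a > 0\<close> \<open>\<delta> > 0\<close>
    unfolding L_def by auto
  \<comment> \<open>After T, an excursion of u beyond \<epsilon> keeps u beyond \<epsilon>/2 for time \<delta>,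
    which would push E below its infimum.\<close>
  have "\<bar>u t\<bar> < \<epsilon>" if "t \<ge> T" for t
  proof (rule ccontr)
    assume "\<not> \<bar>u t\<bar> < \<epsilon>"
    have "a \<le> F x" if "t < x" "x < t + \<delta>" for x
    proof -
      have "\<bar>u x - u t\<bar> \<le> \<epsilon> / 2"
        using u_lip[of t x] \<open>T \<le> t\<close> \<open>T \<ge> 0\<close> that \<open>K > 0\<close>
          mult_left_mono[of "x - t" \<delta> K] by (simp add: \<delta>_def)
      then have "\<epsilon> / 2 \<le> \<bar>u x\<bar>"
        using \<open>\<not> \<bar>u t\<bar> < \<epsilon>\<close> by arith
      then have "(\<epsilon> / 2)\<^sup>2 \<le> (u x)\<^sup>2"
        using \<open>\<epsilon> > 0\<close> by (intro abs_le_square_iff[THEN iffD1]) auto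
      then show ?thesis
        using F_ge[of x] \<open>c > 0\<close> \<open>T \<le> t\<close> \<open>T \<ge> 0\<close> that unfolding a_def
        by (smt (verit) mult_left_mono)
    qed
    then have "E (t + \<delta>) \<le> E t - a * \<delta>"
      using drop[of t "t + \<delta>" a] \<open>T \<le> t\<close> \<open>T \<ge> 0\<close> \<open>\<delta> > 0\<close> by auto
    also have "\<dots> \<le> E T - a * \<delta>"
      using E_antimono \<open>T \<le> t\<close> \<open>T \<ge> 0\<close> by auto
    also have "\<dots> < L"
      using \<open>E T < L + a * \<delta>\<close> by simp
    also have "L \<le> E (t + \<delta>)"
      using L_le \<open>T \<le> t\<close> \<open>T \<ge> 0\<close> \<open>\<delta> > 0\<close> by auto
    finally show False
      by simp
  qed
  then show "\<forall>\<^sub>F t in at_top. dist (u t) 0 < \<epsilon>"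
    unfolding eventually_at_top_linorder by auto
qed

lemma admissible_g_slope:
  assumes "admissible_g g" and "R \<ge> 0"
  obtains m where "m > 0" and "\<And>x y. 0 \<le> y \<Longrightarrow> y \<le> x \<Longrightarrow> x \<le> R \<Longrightarrow> m * (x - y) \<le> g x - g y"
proof -
  obtain g' where g': "\<And>x. x \<ge> 0 \<Longrightarrow> (g has_real_derivative g' x) (at x within {0..})"
    and bounds: "\<forall>R\<ge>0. \<exists>m M. 0 < m \<and> (\<forall>x\<in>{0..R}. m \<le> g' x \<and> g' x \<le> M)"
    using assms(1) unfolding admissible_g_def by blast
  obtain m M where "m > 0" "\<forall>x\<in>{0..R}. m \<le> g' x \<and> g' x \<le> M"
    using bounds \<open>R \<ge> 0\<close> by blast
  then have m: "m \<le> g' x" if "0 \<le> x" "x \<le> R" for x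
    using that by simp
  have g_cont: "continuous_on {0..} g"
    using g' by (intro DERIV_continuous_on) simp
  have g'_at: "(g has_real_derivative g' z) (at z)" if "z > 0" for z
    using g'[of z] at_within_interior[of z "{0..}"] that by simp
  have "m * (x - y) \<le> g x - g y" if "0 \<le> y" "y \<le> x" "x \<le> R" for x y
  proof -
    have "- g x \<le> - g y - m * (x - y)"
    proof (rule DERIV_le_imp_decrease[where f'="\<lambda>z. - g' z"])
      show "continuous_on {y..x} (\<lambda>z. - g z)"
        using \<open>0 \<le> y\<close> by (intro continuous_on_minus continuous_on_subset[OF g_cont]) auto
      fix z assume "y < z" "z < x"
      then show "((\<lambda>z. - g z) has_real_derivative - g' z) (at z)"
        using \<open>0 \<le> y\<close> by (intro DERIV_minus g'_at) simp
      show "- g' z \<le> - m"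
        using m[of z] that \<open>y < z\<close> \<open>z < x\<close> by simp
    qed fact
    then show ?thesis
      by simp
  qed
  with \<open>m > 0\<close> show ?thesis
    using that by blast
qed

lemma admissible_g_mono:
  assumes "admissible_g g" and "0 \<le> y" and "y \<le> x"
  shows "g y \<le> g x"
proof -
  have "0 \<le> x"
    using assms by simp
  obtain m where "m > 0"
    and "\<And>u v. 0 \<le> v \<Longrightarrow> v \<le> u \<Longrightarrow> u \<le> x \<Longrightarrow> m * (u - v) \<le> g u - g v"
    using admissible_g_slope[OF assms(1) \<open>0 \<le> x\<close>] by blast
  then have "m * (x - y) \<le> g x - g y"
    using assms by simp
  moreover have "0 \<le> m * (x - y)"
    using \<open>m > 0\<close> \<open>y \<le> x\<close> by simp
  ultimately show ?thesis
    by linarith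
qed

lemma admissible_g_nonneg:
  assumes "admissible_g g" and "x \<ge> 0"
  shows "g x \<ge> 0"
  using admissible_g_mono[OF assms(1) order.refl assms(2)] assms(1)
  by (simp add: admissible_g_def)

lemma norm_Gctl:
  assumes "admissible_g g"
  shows "norm (Gctl g p) = g (norm p)"
  using assms admissible_g_nonneg[OF assms norm_ge_zero, of p]
  by (auto simp: Gctl_def admissible_g_def)

lemma Gctl_strongly_monotone:
  fixes p q :: "real^'d"
  assumes slope: "\<And>x y. 0 \<le> y \<Longrightarrow> y \<le> x \<Longrightarrow> x \<le> R \<Longrightarrow> m * (x - y) \<le> g x - g y"
    and "g 0 = 0" and "norm p \<le> R" and "norm q \<le> R"
  shows "m * (norm (p - q))\<^sup>2 \<le> inner (p - q) (Gctl g p - Gctl g q)"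
proof -
  \<comment> \<open>The value of a at 0 does not affect G; choosing m makes a \<ge> m hold everywhere.\<close>
  define a where "a v = (if v = 0 then m else g (norm v) / norm v)" for v :: "real^'d"
  have G: "Gctl g v = a v *\<^sub>R v" for v
    by (simp add: Gctl_def a_def)
  have ga: "a v * norm v = g (norm v)" for v
    using \<open>g 0 = 0\<close> by (simp add: a_def)
  have am: "m \<le> a v" if "norm v \<le> R" for v
    using slope[of 0 "norm v"] that \<open>g 0 = 0\<close> by (simp add: a_def pos_le_divide_eq)
  let ?x = "norm p" and ?y = "norm q"
  have "0 \<le> (?x - ?y) * ((g ?x - g ?y) - m * (?x - ?y))"
  proof (cases "?y \<le> ?x")
    case True
    then show ?thesis
      using slope[of ?y ?x] assms(3) by simp
  next
    case False
    then have "m * (?y - ?x) \<le> g ?y - g ?x"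
      using slope[of ?x ?y] assms(4) by simp
    then have "(g ?x - g ?y) - m * (?x - ?y) \<le> 0"
      by (simp add: right_diff_distrib)
    with False show ?thesis
      by (intro mult_nonpos_nonpos) auto
  qed
  also have "\<dots> = (a p - m) * ?x\<^sup>2 + (a q - m) * ?y\<^sup>2 - (a p + a q - 2 * m) * (?x * ?y)"
    by (simp add: ga[symmetric] power2_eq_square algebra_simps)
  also have "\<dots> \<le> (a p - m) * ?x\<^sup>2 + (a q - m) * ?y\<^sup>2 - (a p + a q - 2 * m) * inner p q"
    using am[of p] am[of q] assms(3,4) norm_cauchy_schwarz[of p q]
    by (simp add: mult_left_mono)
  also have "\<dots> = inner (p - q) (Gctl g p - Gctl g q) - m * (norm (p - q))\<^sup>2"
    by (simp add: G power2_norm_eq_inner inner_commute algebra_simps)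
  finally show ?thesis
    by simp
qed

lemma Gctl_monotone:
  fixes p q :: "real^'d"
  assumes "admissible_g g"
  shows "0 \<le> inner (p - q) (Gctl g p - Gctl g q)"
proof -
  obtain m where "m > 0"
    and "\<And>x y. 0 \<le> y \<Longrightarrow> y \<le> x \<Longrightarrow> x \<le> max (norm p) (norm q) \<Longrightarrow> m * (x - y) \<le> g x - g y"
    using admissible_g_slope[OF assms, of "max (norm p) (norm q)"] by (auto simp: le_max_iff_disj)
  then have "m * (norm (p - q))\<^sup>2 \<le> inner (p - q) (Gctl g p - Gctl g q)"
    using assms by (intro Gctl_strongly_monotone) (auto simp: admissible_g_def)
  moreover have "0 \<le> m * (norm (p - q))\<^sup>2"
    using \<open>m > 0\<close> by simp
  ultimately show ?thesis
    by linarith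
qed

lemma norm_le_diam_at:
  assumes "finite S" and "i \<in> S" and "j \<in> S"
  shows "norm (x i t - x j t) \<le> diam_at x S t"
  unfolding diam_at_def using assms by (intro Max_ge finite_image_set2) auto

lemma diam_at_tendsto_zero:
  assumes "finite S" and "S \<noteq> {}"
    and "\<And>i j. i \<in> S \<Longrightarrow> j \<in> S \<Longrightarrow> ((\<lambda>t. norm (x i t - x j t)) \<longlongrightarrow> 0) at_top"
  shows "((\<lambda>t. diam_at x S t) \<longlongrightarrow> 0) at_top"
proof (rule tendsto_sandwich[of "\<lambda>_. 0" _ _ "\<lambda>t. \<Sum>i\<in>S. \<Sum>j\<in>S. norm (x i t - x j t)"])
  have "0 \<le> diam_at x S t \<and> diam_at x S t \<le> (\<Sum>i\<in>S. \<Sum>j\<in>S. norm (x i t - x j t))" for t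
  proof -
    have fin: "finite {norm (x i t - x j t) |i j. i \<in> S \<and> j \<in> S}"
      using assms(1) by (intro finite_image_set2) auto
    obtain i j where ij: "i \<in> S" "j \<in> S" and diam: "diam_at x S t = norm (x i t - x j t)"
      using Max_in[OF fin] assms(2) unfolding diam_at_def by auto
    have "norm (x i t - x j t) \<le> (\<Sum>j\<in>S. norm (x i t - x j t))"
      using ij assms(1) by (intro member_le_sum) auto
    also have "\<dots> \<le> (\<Sum>i\<in>S. \<Sum>j\<in>S. norm (x i t - x j t))"
      using ij assms(1) by (intro member_le_sum[of i] sum_nonneg) auto
    finally show ?thesis
      unfolding diam by simp
  qed
  then show "\<forall>\<^sub>F t in at_top. 0 \<le> diam_at x S t"
    and "\<forall>\<^sub>F t in at_top. diam_at x S t \<le> (\<Sum>i\<in>S. \<Sum>j\<in>S. norm (x i t - x j t))"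
    by simp_all
  show "((\<lambda>t. \<Sum>i\<in>S. \<Sum>j\<in>S. norm (x i t - x j t)) \<longlongrightarrow> 0) at_top"
    using assms(3) by (intro tendsto_null_sum) auto
qed simp

locale CS_solution =
  fixes N :: nat and \<kappa> :: real and g \<psi> :: "real \<Rightarrow> real"
    and q p :: "nat \<Rightarrow> real \<Rightarrow> real^'d"
  assumes kappa_pos: "\<kappa> > 0"
    and adm_g: "admissible_g g"
    and adm_psi: "admissible_psi \<psi>"
    and solution: "CS_global_solution N \<kappa> g \<psi> q p"
begin

lemma g_zero: "g 0 = 0"
  using adm_g by (simp add: admissible_g_def)

lemma psi_pos: "r \<ge> 0 \<Longrightarrow> \<psi> r > 0"
  using adm_psi by (simp add: admissible_psi_def)

lemma psi_antimono: "0 \<le> r \<Longrightarrow> r \<le> s \<Longrightarrow> \<psi> s \<le> \<psi> r"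
  using adm_psi by (simp add: admissible_psi_def)

lemma continuous_on_velocity: "i \<in> {1..N} \<Longrightarrow> continuous_on {0..} (p i)"
  using solution by (simp add: CS_global_solution_def)

definition force :: "nat \<Rightarrow> real \<Rightarrow> real^'d" where
  "force i t = (\<kappa> / N) *\<^sub>R
     (\<Sum>k\<in>{1..N}. \<psi> (norm (q k t - q i t)) *\<^sub>R (Gctl g (p k t) - Gctl g (p i t)))"

lemma velocity_has_vector_derivative:
  "i \<in> {1..N} \<Longrightarrow> t > 0 \<Longrightarrow> (p i has_vector_derivative force i t) (at t)"
  using solution by (simp add: CS_global_solution_def force_def)

definition energy :: "real \<Rightarrow> real" where
  "energy t = (\<Sum>i\<in>{1..N}. (norm (p i t))\<^sup>2)"

definition interaction :: "real \<Rightarrow> nat \<Rightarrow> nat \<Rightarrow> real" where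
  "interaction t i k =
     \<psi> (norm (q k t - q i t)) * inner (p k t - p i t) (Gctl g (p k t) - Gctl g (p i t))"

definition dissipation :: "real \<Rightarrow> real" where
  "dissipation t = (\<Sum>i\<in>{1..N}. \<Sum>k\<in>{1..N}. interaction t i k)"

lemma energy_nonneg: "0 \<le> energy t"
  by (simp add: energy_def sum_nonneg)

lemma continuous_on_energy: "continuous_on {0..} energy"
  unfolding energy_def
proof (intro continuous_on_sum continuous_on_power continuous_on_norm)
  show "continuous_on {0..} (p i)" if "i \<in> {1..N}" for i
    using that by (rule continuous_on_velocity)
qed

lemma interaction_nonneg: "0 \<le> interaction t i k"
  unfolding interaction_def
  by (intro mult_nonneg_nonneg less_imp_le[OF psi_pos] Gctl_monotone[OF adm_g]) simp

lemma dissipation_nonneg: "0 \<le> dissipation t"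
  by (simp add: dissipation_def sum_nonneg interaction_nonneg)

lemma interaction_le_dissipation:
  assumes "i \<in> {1..N}" and "k \<in> {1..N}"
  shows "interaction t i k \<le> dissipation t"
proof -
  have "interaction t i k \<le> (\<Sum>k\<in>{1..N}. interaction t i k)"
    using assms by (intro member_le_sum interaction_nonneg) auto
  also have "\<dots> \<le> dissipation t"
    unfolding dissipation_def using assms
    by (intro member_le_sum[of i] sum_nonneg interaction_nonneg) auto
  finally show ?thesis .
qed

lemma energy_has_derivative:
  assumes "t > 0"
  shows "(energy has_real_derivative - (\<kappa> / N) * dissipation t) (at t)"
proof -
  define w where "w i k = \<psi> (norm (q k t - q i t))" for i k
  define G where "G i = Gctl g (p i t)" for i
  have w_sym: "w i k = w k i" for i k
    by (simp add: w_def norm_minus_commute)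
  have "(energy has_real_derivative
          (\<Sum>i\<in>{1..N}. 2 * inner (p i t) ((\<kappa> / N) *\<^sub>R (\<Sum>k\<in>{1..N}. w i k *\<^sub>R (G k - G i))))) (at t)"
    unfolding energy_def w_def G_def force_def[symmetric] using assms
    by (intro has_real_derivative_sum_power2_norm velocity_has_vector_derivative)
  moreover have "(\<Sum>i\<in>{1..N}. 2 * inner (p i t) ((\<kappa> / N) *\<^sub>R (\<Sum>k\<in>{1..N}. w i k *\<^sub>R (G k - G i))))
      = (\<kappa> / N) * (2 * (\<Sum>i\<in>{1..N}. \<Sum>k\<in>{1..N}. w i k * inner (p i t) (G k - G i)))"
    by (simp add: inner_sum_right sum_distrib_left mult_ac)
  moreover have "2 * (\<Sum>i\<in>{1..N}. \<Sum>k\<in>{1..N}. w i k * inner (p i t) (G k - G i)) = - dissipation t"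
    using double_sum_symmetrize[of w "\<lambda>i. p i t" G "{1..N}", OF w_sym]
    by (simp add: dissipation_def interaction_def w_def G_def)
  ultimately show ?thesis
    by simp
qed

lemma energy_antimono:
  assumes "0 \<le> s" and "s \<le> t"
  shows "energy t \<le> energy s"
proof -
  have "energy t \<le> energy s - 0 * (t - s)"
    using assms kappa_pos dissipation_nonneg energy_has_derivative
    by (intro DERIV_le_imp_decrease[where f'="\<lambda>x. - (\<kappa> / N) * dissipation x"]
        continuous_on_subset[OF continuous_on_energy]) auto
  then show ?thesis
    by simp
qed

lemma norm_velocity_le:
  assumes "i \<in> {1..N}" and "t \<ge> 0"
  shows "norm (p i t) \<le> sqrt (energy 0)"
proof -
  have "(norm (p i t))\<^sup>2 \<le> energy t"
    unfolding energy_def using assms by (intro member_le_sum) auto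
  also have "\<dots> \<le> energy 0"
    using assms energy_antimono by simp
  finally show ?thesis
    by (simp add: real_le_rsqrt)
qed

lemma force_bounded:
  obtains K where "K > 0" and "\<And>i t. i \<in> {1..N} \<Longrightarrow> t \<ge> 0 \<Longrightarrow> norm (force i t) \<le> K"
proof -
  define R where "R = sqrt (energy 0)"
  obtain B where B: "\<And>r. r \<ge> 0 \<Longrightarrow> \<psi> r \<le> B"
    using adm_psi by (auto simp: admissible_psi_def)
  have "B > 0"
    using B[of 0] psi_pos[of 0] by simp
  have "g R \<ge> 0"
    by (simp add: R_def energy_nonneg admissible_g_nonneg[OF adm_g])
  have "norm (force i t) \<le> \<kappa> * (B * (2 * g R))" if "i \<in> {1..N}" "t \<ge> 0" for i t
  proof -
    have G_le: "norm (Gctl g (p j t)) \<le> g R" if "j \<in> {1..N}" for j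
      unfolding norm_Gctl[OF adm_g] R_def
      by (rule admissible_g_mono[OF adm_g norm_ge_zero norm_velocity_le[OF that \<open>t \<ge> 0\<close>]])
    have term_le: "norm (\<psi> (norm (q k t - q i t)) *\<^sub>R (Gctl g (p k t) - Gctl g (p i t)))
        \<le> B * (2 * g R)" if "k \<in> {1..N}" for k
    proof -
      have "norm (Gctl g (p k t) - Gctl g (p i t)) \<le> 2 * g R"
        using G_le[OF that] G_le[OF \<open>i \<in> {1..N}\<close>]
          norm_triangle_ineq4[of "Gctl g (p k t)" "Gctl g (p i t)"] by linarith
      moreover have "0 < \<psi> (norm (q k t - q i t))" "\<psi> (norm (q k t - q i t)) \<le> B"
        using B psi_pos by simp_all
      ultimately show ?thesis
        by (simp add: mult_mono)
    qed
    have "norm (force i t)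
        = \<kappa> / N * norm (\<Sum>k\<in>{1..N}. \<psi> (norm (q k t - q i t)) *\<^sub>R (Gctl g (p k t) - Gctl g (p i t)))"
      using kappa_pos by (simp add: force_def abs_of_pos)
    also have "\<dots> \<le> \<kappa> / N * (\<Sum>k\<in>{1..N}. B * (2 * g R))"
      using term_le kappa_pos by (intro mult_left_mono order.trans[OF norm_sum] sum_mono) auto
    also have "\<dots> \<le> \<kappa> * (B * (2 * g R))"
      using kappa_pos \<open>B > 0\<close> \<open>g R \<ge> 0\<close> by (cases "N = 0") auto
    finally show ?thesis .
  qed
  moreover have "\<kappa> * (B * (2 * g R)) + 1 > 0"
    using kappa_pos \<open>B > 0\<close> \<open>g R \<ge> 0\<close> by (intro add_nonneg_pos mult_nonneg_nonneg) auto
  ultimately show thesis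
    using that[of "\<kappa> * (B * (2 * g R)) + 1"] by force
qed

lemma velocity_Lipschitz:
  obtains K where "K > 0"
    and "\<And>i s t. i \<in> {1..N} \<Longrightarrow> 0 \<le> s \<Longrightarrow> s \<le> t \<Longrightarrow> norm (p i t - p i s) \<le> K * (t - s)"
proof -
  obtain K where "K > 0" and K: "\<And>i t. i \<in> {1..N} \<Longrightarrow> t \<ge> 0 \<Longrightarrow> norm (force i t) \<le> K"
    using force_bounded by blast
  have "norm (p i t - p i s) \<le> K * (t - s)" if "i \<in> {1..N}" "0 \<le> s" "s \<le> t" for i s t
    using that K velocity_has_vector_derivative
    by (intro has_vector_derivative_bound_imp_norm_diff_le[where f'="force i"]
        continuous_on_subset[OF continuous_on_velocity]) auto
  with \<open>K > 0\<close> show thesis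
    using that by blast
qed

lemma cluster_interaction_lower_bound:
  assumes "A \<subseteq> {1..N}" and "i \<in> A" and "k \<in> A"
    and "t \<ge> 0" and "diam_at q A t \<le> C"
    and slope: "\<And>x y. 0 \<le> y \<Longrightarrow> y \<le> x \<Longrightarrow> x \<le> sqrt (energy 0) \<Longrightarrow> m * (x - y) \<le> g x - g y"
    and "m > 0"
  shows "\<psi> (max C 0) * (m * (norm (p i t - p k t))\<^sup>2) \<le> interaction t i k"
proof -
  have "finite A" and ik: "i \<in> {1..N}" "k \<in> {1..N}"
    using assms(1-3) finite_subset by auto
  have "\<psi> (max C 0) \<le> \<psi> (norm (q k t - q i t))"
    using norm_le_diam_at[OF \<open>finite A\<close> \<open>k \<in> A\<close> \<open>i \<in> A\<close>, of q t] assms(5)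
    by (intro psi_antimono) auto
  moreover have "m * (norm (p k t - p i t))\<^sup>2 \<le> inner (p k t - p i t) (Gctl g (p k t) - Gctl g (p i t))"
    using norm_velocity_le[OF ik(2) \<open>t \<ge> 0\<close>] norm_velocity_le[OF ik(1) \<open>t \<ge> 0\<close>]
    by (intro Gctl_strongly_monotone[OF slope g_zero])
  ultimately show ?thesis
    unfolding interaction_def using psi_pos[of "max C 0"] \<open>m > 0\<close>
    by (intro mult_mono) (auto simp: norm_minus_commute)
qed

lemma cluster_velocity_alignment:
  assumes "A \<subseteq> {1..N}" and "A \<noteq> {}"
    and bounded: "\<And>t. t \<ge> 0 \<Longrightarrow> diam_at q A t \<le> C"
  shows "((\<lambda>t. diam_at p A t) \<longlongrightarrow> 0) at_top"
proof (rule diam_at_tendsto_zero)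
  show "finite A"
    using assms(1) finite_subset by blast
  show "A \<noteq> {}"
    by fact
  fix i k assume "i \<in> A" "k \<in> A"
  then have ik: "i \<in> {1..N}" "k \<in> {1..N}"
    using assms(1) by auto
  then have "N > 0"
    by simp
  obtain K where "K > 0" and lip: "\<And>i s t. i \<in> {1..N} \<Longrightarrow> 0 \<le> s \<Longrightarrow> s \<le> t \<Longrightarrow> norm (p i t - p i s) \<le> K * (t - s)"
    using velocity_Lipschitz by blast
  obtain m where "m > 0"
    and slope: "\<And>x y. 0 \<le> y \<Longrightarrow> y \<le> x \<Longrightarrow> x \<le> sqrt (energy 0) \<Longrightarrow> m * (x - y) \<le> g x - g y"
    using admissible_g_slope[OF adm_g, of "sqrt (energy 0)"] energy_nonneg by auto
  define c where "c = \<kappa> / N * (\<psi> (max C 0) * m)"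
  show "((\<lambda>t. norm (p i t - p k t)) \<longlongrightarrow> 0) at_top"
  proof (rule tendsto_zero_if_Lipschitz_and_dissipated[where F="\<lambda>t. \<kappa> / N * dissipation t"])
    show "continuous_on {0..} energy"
      by (rule continuous_on_energy)
    show "(energy has_real_derivative - (\<kappa> / N * dissipation t)) (at t)" if "t > 0" for t
      using energy_has_derivative[OF that] by simp
    show "0 \<le> energy t" for t
      by (rule energy_nonneg)
    show "c > 0"
      using kappa_pos \<open>N > 0\<close> \<open>m > 0\<close> psi_pos[of "max C 0"] by (simp add: c_def)
    show "2 * K > 0"
      using \<open>K > 0\<close> by simp
    show "c * (norm (p i t - p k t))\<^sup>2 \<le> \<kappa> / N * dissipation t" if "t > 0" for t
    proof -
      have "\<psi> (max C 0) * (m * (norm (p i t - p k t))\<^sup>2) \<le> interaction t i k"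
        using that bounded[of t] \<open>m > 0\<close>
        by (intro cluster_interaction_lower_bound[OF assms(1) \<open>i \<in> A\<close> \<open>k \<in> A\<close> _ _ slope]) auto
      also have "\<dots> \<le> dissipation t"
        by (rule interaction_le_dissipation[OF ik])
      finally have "\<kappa> / N * (\<psi> (max C 0) * (m * (norm (p i t - p k t))\<^sup>2)) \<le> \<kappa> / N * dissipation t"
        using kappa_pos by (intro mult_left_mono) auto
      then show ?thesis
        by (simp add: c_def mult.assoc)
    qed
    show "\<bar>norm (p i t - p k t) - norm (p i s - p k s)\<bar> \<le> 2 * K * (t - s)"
      if "0 \<le> s" "s \<le> t" for s t
      using lip[OF ik(1) that] lip[OF ik(2) that] by (rule norm_diff_Lipschitz)
  qed
qed

end

theorem proposition2p2:
  fixes N :: nat and \<kappa> :: real and g \<psi> :: "real \<Rightarrow> real"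
    and q p :: "nat \<Rightarrow> real \<Rightarrow> real^'d"
  assumes "N \<ge> 2" and "\<kappa> > 0"
    and "admissible_g g" and "admissible_psi \<psi>"
    and "CS_global_solution N \<kappa> g \<psi> q p"
  shows "bi_cluster_flocking N q p \<longleftrightarrow>
         (\<exists>A B. A \<union> B = {1..N} \<and> A \<inter> B = {} \<and> A \<noteq> {} \<and> B \<noteq> {}
                \<and> bounded_clusters_separating q A B)"
proof
  assume "bi_cluster_flocking N q p"
  then obtain S where "S \<noteq> {}" "S \<subset> {1..N}" "bounded_clusters_separating q S ({1..N} - S)"
    unfolding bi_cluster_flocking_def by blast
  then show "\<exists>A B. A \<union> B = {1..N} \<and> A \<inter> B = {} \<and> A \<noteq> {} \<and> B \<noteq> {}
                \<and> bounded_clusters_separating q A B"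
    by (intro exI[of _ S] exI[of _ "{1..N} - S"]) auto
next
  assume "\<exists>A B. A \<union> B = {1..N} \<and> A \<inter> B = {} \<and> A \<noteq> {} \<and> B \<noteq> {}
                \<and> bounded_clusters_separating q A B"
  then obtain A B where partition: "A \<union> B = {1..N}" "A \<inter> B = {}" "A \<noteq> {}" "B \<noteq> {}"
    and clusters: "bounded_clusters_separating q A B"
    by blast
  interpret CS_solution N \<kappa> g \<psi> q p
    using assms by unfold_locales
  obtain C where "\<And>t. t \<ge> 0 \<Longrightarrow> max (diam_at q A t) (diam_at q B t) \<le> C"
    using clusters unfolding bounded_clusters_separating_def by blast
  then have "((\<lambda>t. diam_at p A t) \<longlongrightarrow> 0) at_top" "((\<lambda>t. diam_at p B t) \<longlongrightarrow> 0) at_top"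
    using partition by (auto intro!: cluster_velocity_alignment[where C=C])
  moreover have "{1..N} - A = B"
    using partition by blast
  ultimately show "bi_cluster_flocking N q p"
    unfolding bi_cluster_flocking_def using partition clusters by (intro exI[of _ A]) auto
qed

end
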